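(* Let $k\ge 1$, $\tau=1000k$, $\rho=1-\frac{1}{10\tau}$, and let $g:\{0,1\}^n\to\{0,1\}$ be a $k$-term DNF. If $y^1\in\{0,1\}^n$ satisfies $g_{\le\tau}(y^1)=1$, then $T_\rho g(y^1)\ge 0.9$.
   Context: $g_{\le L}$ is the sub-DNF of $g$ consisting of terms with at most $L$ literals. For $x\in\{0,1\}^n$, $\mathbf{y}\sim N_\rho(x)$ means each bit independently has $\mathbf{y}_i=x_i$ with probability $\rho$ and $\mathbf{y}_i=1-x_i$ with probability $1-\rho$. The noise operator is $T_\rho g(x)=\mathbb{E}_{\mathbf{y}\sim N_\rho(x)}[g(\mathbf{y})]$. *)

theory Defs
  imports Complex_Main "HOL-Library.FuncSet"
begin

text \<open>A literal is a pair (i, b) meaning "x_i = b"; a term is a finite set of literals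
  (its length is the number of literals); a DNF is a finite set of terms.\<close>

type_synonym lit = "nat \<times> bool"

definition is_dnf :: "nat \<Rightarrow> lit set set \<Rightarrow> bool" where
  "is_dnf n F \<longleftrightarrow> finite F \<and> (\<forall>t\<in>F. finite t \<and> (\<forall>(i, b)\<in>t. i < n))"

definition term_sat :: "lit set \<Rightarrow> (nat \<Rightarrow> bool) \<Rightarrow> bool" where
  "term_sat t x \<longleftrightarrow> (\<forall>(i, b)\<in>t. x i = b)"

definition dnf_eval :: "lit set set \<Rightarrow> (nat \<Rightarrow> bool) \<Rightarrow> real" where
  "dnf_eval F x = (if \<exists>t\<in>F. term_sat t x then 1 else 0)"

definition dnf_le :: "nat \<Rightarrow> lit set set \<Rightarrow> lit set set" where
  "dnf_le L F = {t \<in> F. card t \<le> L}"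

definition cube :: "nat \<Rightarrow> (nat \<Rightarrow> bool) set" where
  "cube n = PiE {..<n} (\<lambda>_. UNIV)"

definition noise_op :: "nat \<Rightarrow> real \<Rightarrow> ((nat \<Rightarrow> bool) \<Rightarrow> real) \<Rightarrow> (nat \<Rightarrow> bool) \<Rightarrow> real" where
  "noise_op n \<rho> g x =
     (\<Sum>y\<in>cube n. (\<Prod>i<n. if y i = x i then \<rho> else 1 - \<rho>) * g y)"

end

theory Submission
  imports Defs
begin

text \<open>If the short term t is satisfied at y1, the noisy point still satisfies g as soon as
  it agrees with y1 on the at most \<open>\<tau>\<close> variables of t. Under noise this happens with
  probability \<open>\<rho>^|t| \<ge> 1 - \<tau>(1 - \<rho>) = 0.9\<close> by Bernoulli's inequality.\<close>

lemma noise_op_agreement_indicator: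
  assumes "S \<subseteq> {..<n}"
  shows "noise_op n \<rho> (\<lambda>y. if \<forall>i\<in>S. y i = x i then 1 else 0) x = \<rho> ^ card S"
proof -
  define h where
    "h i b = (if i \<in> S \<and> b \<noteq> x i then 0 else if b = x i then \<rho> else 1 - \<rho>)" for i b
  have factor: "(\<Prod>i<n. if y i = x i then \<rho> else 1 - \<rho>) * (if \<forall>i\<in>S. y i = x i then 1 else 0)
      = (\<Prod>i<n. h i (y i))" for y
  proof (cases "\<forall>i\<in>S. y i = x i")
    case True
    then show ?thesis unfolding h_def by (auto intro!: prod.cong)
  next
    case False
    then obtain j where "j \<in> S" "y j \<noteq> x j" by auto
    then have "(\<Prod>i<n. h i (y i)) = 0"
      using assms unfolding h_def by (intro prod_zero) auto
    with False show ?thesis by auto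
  qed
  have "noise_op n \<rho> (\<lambda>y. if \<forall>i\<in>S. y i = x i then 1 else 0) x = (\<Sum>y\<in>cube n. \<Prod>i<n. h i (y i))"
    unfolding noise_op_def factor ..
  also have "\<dots> = (\<Prod>i<n. \<Sum>b\<in>UNIV. h i b)"
    unfolding cube_def by (rule prod_sum_PiE[symmetric]) auto
  also have "\<dots> = (\<Prod>i<n. if i \<in> S then \<rho> else 1)"
    unfolding h_def UNIV_bool by (intro prod.cong) (auto split: if_splits)
  also have "\<dots> = (\<Prod>i\<in>{..<n} \<inter> S. \<rho>)"
    by (simp add: prod.If_cases Int_def)
  also have "{..<n} \<inter> S = S"
    using assms by auto
  finally show ?thesis
    by simp
qed

lemma noise_op_mono:
  assumes "0 \<le> \<rho>" "\<rho> \<le> 1" "\<And>y. y \<in> cube n \<Longrightarrow> g y \<le> g' y"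
  shows "noise_op n \<rho> g x \<le> noise_op n \<rho> g' x"
  unfolding noise_op_def using assms by (intro sum_mono mult_left_mono prod_nonneg) auto

lemma noise_op_dnf_eval_ge_power_card:
  assumes "is_dnf n F" "t \<in> F" "term_sat t x" "0 \<le> \<rho>" "\<rho> \<le> 1"
  shows "\<rho> ^ card t \<le> noise_op n \<rho> (dnf_eval F) x"
proof -
  have "finite t" and vars: "fst ` t \<subseteq> {..<n}"
    using assms(1,2) unfolding is_dnf_def by fastforce+
  have "\<rho> ^ card t \<le> \<rho> ^ card (fst ` t)"
    using card_image_le[OF \<open>finite t\<close>] assms(4,5) by (rule power_decreasing)
  also have "\<dots> = noise_op n \<rho> (\<lambda>y. if \<forall>i\<in>fst ` t. y i = x i then 1 else 0) x"
    using vars by (rule noise_op_agreement_indicator[symmetric])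
  also have "\<dots> \<le> noise_op n \<rho> (dnf_eval F) x"
  proof (rule noise_op_mono[OF assms(4,5)])
    fix y
    have "term_sat t y" if "\<forall>i\<in>fst ` t. y i = x i"
      using assms(3) that unfolding term_sat_def by force
    then show "(if \<forall>i\<in>fst ` t. y i = x i then 1 else 0) \<le> dnf_eval F y"
      using assms(2) unfolding dnf_eval_def by auto
  qed
  finally show ?thesis .
qed

theorem claim6p4:
  fixes n k :: nat and F :: "lit set set" and \<tau> \<rho> :: real and y1 :: "nat \<Rightarrow> bool"
  assumes "k \<ge> 1"
    and "\<tau> = 1000 * real k"
    and "\<rho> = 1 - 1 / (10 * \<tau>)"
    and "is_dnf n F" and "card F \<le> k"
    and "y1 \<in> cube n"
    and "dnf_eval (dnf_le (1000 * k) F) y1 = 1"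
  shows "noise_op n \<rho> (dnf_eval F) y1 \<ge> 0.9"
proof -
  obtain t where t: "t \<in> F" "card t \<le> 1000 * k" "term_sat t y1"
    using assms(7) unfolding dnf_eval_def dnf_le_def by (auto split: if_splits)
  have gap: "1 - \<rho> = 1 / (10000 * real k)"
    using assms(2,3) by simp
  then have "0 \<le> 1 - \<rho>" "1 - \<rho> \<le> 1"
    using assms(1) by auto
  then have "0 \<le> \<rho>" "\<rho> \<le> 1"
    by linarith+
  have "real (card t) * (1 - \<rho>) \<le> 1000 * real k * (1 - \<rho>)"
    using t(2) \<open>0 \<le> 1 - \<rho>\<close> by (intro mult_right_mono) auto
  also have "\<dots> = 0.1"
    using gap assms(1) by simp
  finally have "0.9 \<le> 1 - real (card t) * (1 - \<rho>)"
    by simp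
  also have "\<dots> \<le> \<rho> ^ card t"
    using Bernoulli_inequality[of "\<rho> - 1" "card t"] \<open>0 \<le> \<rho>\<close> by (simp add: algebra_simps)
  also have "\<dots> \<le> noise_op n \<rho> (dnf_eval F) y1"
    using noise_op_dnf_eval_ge_power_card[OF assms(4) t(1,3)] \<open>0 \<le> \<rho>\<close> \<open>\<rho> \<le> 1\<close> .
  finally show ?thesis .
qed

end
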